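(* Let $f\ge1$. The group $G=\mathfrak{S}_2\times\mathfrak{S}_{f+1}$, acting on $\mathbb{R}^2\times\mathbb{R}^{f+1}$ by permuting coordinates within each factor, acts on the vertices of the sweep polytope $\mathcal{L}(\Delta_1\times\Delta_f)$, and the number of orbits of vertices equals the Catalan number $C_{f+1}=\frac{1}{f+2}\binom{2f+2}{f+1}$ (the number of standard Young tableaux of shape $2\times(f+1)$).
   Context: $\Delta_{k}=\operatorname{conv}\{\mathbf{e}_1,\dots,\mathbf{e}_{k+1}\}\subset\mathbb{R}^{k+1}$. For a point configuration $\mathbf{A}=\{\mathbf{v}_1,\dots,\mathbf{v}_n\}$ (here the vertex set of $\Delta_1\times\Delta_f$, $n=2(f+1)$) and weights $w_1>\dots>w_n>0$, $\sum w_i=1$, the sweep polytope is $\mathcal{L}(\mathbf{A})=\operatorname{conv}\{\sum_i w_i\mathbf{v}_{\sigma(i)}:\sigma\in\mathfrak{S}_n\}$; its vertices are exactly the points $\sum_i w_i\mathbf{v}_{\sigma(i)}$ for orderings $\sigma$ induced (in decreasing order of value) by linear functionals injective on $\mathbf{A}$ (sweeps). *)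

theory Defs
  imports "HOL-Analysis.Analysis"
begin

text \<open>Vertex set of the product of simplices Delta_1 x Delta_f, realised in
  R^2 x R^(f+1) with f + 1 = CARD('m).\<close>
definition prod_simplex_vertices :: "((real^2) \<times> (real^('m::finite))) set" where
  "prod_simplex_vertices = {(axis i 1, axis j 1) | i j. True}"

definition sweep_polytope :: "'a::real_vector set \<Rightarrow> (nat \<Rightarrow> real) \<Rightarrow> 'a set" where
  "sweep_polytope A w = convex hull
     {(\<Sum>i<card A. w i *\<^sub>R p i) | p. bij_betw p {..<card A} A}"

definition admissible_weights :: "nat \<Rightarrow> (nat \<Rightarrow> real) \<Rightarrow> bool" where
  "admissible_weights n w \<longleftrightarrow>
     (\<forall>i j. i < j \<and> j < n \<longrightarrow> w j < w i) \<and> (\<forall>i<n. 0 < w i) \<and> (\<Sum>i<n. w i) = 1"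

definition perm_act :: "((2 \<Rightarrow> 2) \<times> ('m::finite \<Rightarrow> 'm)) \<Rightarrow> (real^2) \<times> (real^'m) \<Rightarrow> (real^2) \<times> (real^'m)" where
  "perm_act g x = ((\<chi> i. fst x $ fst g i), (\<chi> j. snd x $ snd g j))"

definition perm_group :: "((2 \<Rightarrow> 2) \<times> ('m::finite \<Rightarrow> 'm)) set" where
  "perm_group = {(s, t). s permutes UNIV \<and> t permutes UNIV}"

definition catalan :: "nat \<Rightarrow> real" where
  "catalan m = real (2 * m choose m) / real (m + 1)"

end

theory Submission
  imports Defs
begin

text \<open>A generic linear functional c sorts the configuration A strictly, and by the
  rearrangement inequality the resulting sweep point is the unique maximiser of c among all
  points sum_i w_i v_sigma(i); perturbing a functional that exposes a vertex shows conversely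
  that every vertex arises in this way, and distinct sweeps give distinct vertices.
  On Delta_1 x Delta_f a functional (x, y) takes the value x_a + y_b at the vertex (a, b), so a
  sweep visits each row in decreasing order of y, and the first row visited dominates the other
  one column by column. Hence a sweep is determined up to the action of S_2 x S_(f+1) by its
  row word, recording at each step whether the vertex lies in the first row; these words are
  exactly the ballot sequences with f + 1 letters of each kind, every ballot sequence being
  realised by an inductively constructed functional. Ballot sequences are counted by the
  Catalan number via the reflection formula.\<close>

lemma sum_prefix_le_sorted:
  fixes f :: "'a \<Rightarrow> real" and N k :: nat
  assumes fin: "finite A" and p: "bij_betw p {..<N} A" and q: "bij_betw q {..<N} A"
    and dec: "\<And>i j. i < j \<Longrightarrow> j < N \<Longrightarrow> f (p j) < f (p i)"
    and k: "k < N"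
  shows "(\<Sum>i\<le>k. f (q i)) \<le> (\<Sum>i\<le>k. f (p i))"
    and "q ` {..k} \<noteq> p ` {..k} \<Longrightarrow> (\<Sum>i\<le>k. f (q i)) < (\<Sum>i\<le>k. f (p i))"
proof -
  define P where "P = p ` {..k}"
  define Q where "Q = q ` {..k}"
  have sub: "{..k} \<subseteq> {..<N}" using k by auto
  have injp: "inj_on p {..k}" and injq: "inj_on q {..k}"
    using p q inj_on_subset[OF _ sub] by (auto simp: bij_betw_def)
  have sp: "(\<Sum>i\<le>k. f (p i)) = sum f P" and sq: "(\<Sum>i\<le>k. f (q i)) = sum f Q"
    unfolding P_def Q_def by (simp_all add: sum.reindex[OF injp] sum.reindex[OF injq])
  have cP: "card P = card Q"
    unfolding P_def Q_def by (simp add: card_image[OF injp] card_image[OF injq])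
  have PA: "P \<subseteq> A" and QA: "Q \<subseteq> A"
    unfolding P_def Q_def using p q k by (auto simp: bij_betw_def)
  have finP: "finite P" "finite Q" using PA QA fin finite_subset by auto
  have above: "f (p k) \<le> f u" if "u \<in> P" for u
    using that dec[of _ k] k unfolding P_def by (auto simp: le_less)
  have below: "f u < f (p k)" if u: "u \<in> Q - P" for u
  proof -
    obtain j where j: "j < N" "u = p j" using u QA p by (auto simp: bij_betw_def)
    then have "k < j" using u unfolding P_def by (auto simp: not_le[symmetric])
    then show ?thesis using dec[of k j] j by simp
  qed
  have cd: "card (Q - P) = card (P - Q)"
    using cP finP by (simp add: card_Diff_subset_Int Int_commute)
  have s1: "sum f Q = sum f (Q \<inter> P) + sum f (Q - P)"
   and s2: "sum f P = sum f (Q \<inter> P) + sum f (P - Q)"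
    using finP by (metis sum.Int_Diff Int_commute)+
  have a1: "sum f (Q - P) \<le> real (card (Q - P)) * f (p k)"
    using sum_bounded_above[of "Q - P" f "f (p k)"] below by fastforce
  have a2: "real (card (Q - P)) * f (p k) \<le> sum f (P - Q)"
    using sum_bounded_below[of "P - Q" "f (p k)" f] above cd by fastforce
  show "(\<Sum>i\<le>k. f (q i)) \<le> (\<Sum>i\<le>k. f (p i))"
    using a1 a2 s1 s2 sp sq by linarith
  assume "q ` {..k} \<noteq> p ` {..k}"
  then have "Q - P \<noteq> {}"
    using cP finP card_subset_eq[of P Q] unfolding P_def Q_def by auto
  then have "sum f (Q - P) < real (card (Q - P)) * f (p k)"
    using sum_strict_mono[of "Q - P" f "\<lambda>_. f (p k)"] below finP by auto
  then show "(\<Sum>i\<le>k. f (q i)) < (\<Sum>i\<le>k. f (p i))"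
    using a2 s1 s2 sp sq by linarith
qed

lemma summation_by_parts:
  fixes u a :: "nat \<Rightarrow> real"
  shows "(\<Sum>i<n. u i * a i) = (\<Sum>k<n. (u k - u (Suc k)) * (\<Sum>i\<le>k. a i)) + u n * (\<Sum>i<n. a i)"
proof (induction n)
  case (Suc n)
  have "(\<Sum>i\<le>n. a i) = (\<Sum>i<n. a i) + a n" by (simp add: lessThan_Suc_atMost[symmetric])
  then show ?case using Suc by (simp add: algebra_simps)
qed simp

text \<open>The rearrangement inequality, via summation by parts.\<close>
lemma weighted_sum_le_sorted:
  fixes f :: "'a \<Rightarrow> real" and w :: "nat \<Rightarrow> real" and N :: nat
  assumes fin: "finite A" and p: "bij_betw p {..<N} A" and q: "bij_betw q {..<N} A"
    and dec: "\<And>i j. i < j \<Longrightarrow> j < N \<Longrightarrow> f (p j) < f (p i)"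
    and wdec: "\<And>i j. i < j \<Longrightarrow> j < N \<Longrightarrow> w j < w i"
    and wpos: "\<And>i. i < N \<Longrightarrow> 0 < w i"
  shows "(\<Sum>i<N. w i * f (q i)) \<le> (\<Sum>i<N. w i * f (p i))"
    and "\<exists>i<N. q i \<noteq> p i \<Longrightarrow> (\<Sum>i<N. w i * f (q i)) < (\<Sum>i<N. w i * f (p i))"
proof -
  define u where "u k = (if k < N then w k else 0)" for k
  have dpos: "0 < u k - u (Suc k)" if "k < N" for k
    using that wdec[of k "Suc k"] wpos[of k] by (auto simp: u_def)
  have parts: "(\<Sum>i<N. w i * a i) = (\<Sum>k<N. (u k - u (Suc k)) * (\<Sum>i\<le>k. a i))" for a
  proof -
    have "(\<Sum>i<N. w i * a i) = (\<Sum>i<N. u i * a i)" by (intro sum.cong) (auto simp: u_def)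
    then show ?thesis using summation_by_parts[of u a N] by (simp add: u_def)
  qed
  have le: "(u k - u (Suc k)) * (\<Sum>i\<le>k. f (q i)) \<le> (u k - u (Suc k)) * (\<Sum>i\<le>k. f (p i))"
    if "k \<in> {..<N}" for k
    using sum_prefix_le_sorted(1)[where f=f, OF fin p q dec, of k] dpos[of k] that
    by (intro mult_left_mono) auto
  show "(\<Sum>i<N. w i * f (q i)) \<le> (\<Sum>i<N. w i * f (p i))"
    unfolding parts by (intro sum_mono le)
  assume "\<exists>i<N. q i \<noteq> p i"
  then obtain k where k: "k < N" "q k \<noteq> p k" and before: "\<And>j. j < k \<Longrightarrow> q j = p j"
    using exists_least_iff[of "\<lambda>i. i < N \<and> q i \<noteq> p i"] by (metis order.strict_trans)
  have "q ` {..k} \<noteq> p ` {..k}"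
  proof
    assume "q ` {..k} = p ` {..k}"
    then obtain j where j: "j \<le> k" "q k = p j" by (metis atMost_iff imageE imageI order_refl)
    then have "j < k" using k by (auto simp: le_less)
    then have "q j = q k" using before j by simp
    then show False using \<open>j < k\<close> k q by (auto simp: bij_betw_def dest: inj_onD)
  qed
  then have "(u k - u (Suc k)) * (\<Sum>i\<le>k. f (q i)) < (u k - u (Suc k)) * (\<Sum>i\<le>k. f (p i))"
    using sum_prefix_le_sorted(2)[where f=f, OF fin p q dec k(1)] dpos[OF k(1)] by simp
  then show "(\<Sum>i<N. w i * f (q i)) < (\<Sum>i<N. w i * f (p i))"
    unfolding parts using le k by (intro sum_strict_mono_ex1) auto
qed

lemma extreme_point_of_convex_hull_if_unique_max:
  fixes S :: "'a::euclidean_space set"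
  assumes fin: "finite S" and v: "v \<in> S" and c: "\<And>u. u \<in> S \<Longrightarrow> u \<noteq> v \<Longrightarrow> c \<bullet> u < c \<bullet> v"
  shows "v extreme_point_of convex hull S"
proof -
  have "c \<bullet> u \<le> c \<bullet> v" if "u \<in> S" for u
    using c[of u] that by (cases "u = v") auto
  then have sub: "convex hull S \<subseteq> {x. c \<bullet> x \<le> c \<bullet> v}"
    by (intro hull_minimal) (auto simp: convex_halfspace_le)
  define T where "T = convex hull S \<inter> {x. c \<bullet> x = c \<bullet> v}"
  have T: "T face_of convex hull S"
    unfolding T_def using sub by (intro face_of_Int_supporting_hyperplane_le) auto
  obtain S' where S': "S' \<subseteq> S" "T = convex hull S'"
    by (rule face_of_convex_hull_subset[OF finite_imp_compact[OF fin] T])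
  have "S' \<subseteq> {v}"
  proof
    fix x assume "x \<in> S'"
    then have "x \<in> S" "c \<bullet> x = c \<bullet> v" using S' hull_subset[of S' convex] unfolding T_def by auto
    then show "x \<in> {v}" using c[of x] by (cases "x = v") auto
  qed
  then have "T \<subseteq> {v}" using S'(2) hull_mono[of S' "{v}" convex] by simp
  moreover have "v \<in> T" unfolding T_def using v hull_subset[of S convex] by auto
  ultimately have "T = {v}" by blast
  then show ?thesis using T by (simp add: face_of_singleton)
qed

lemma extreme_point_of_convex_hull_unique_max:
  fixes S :: "'a::euclidean_space set"
  assumes fin: "finite S" and v: "v extreme_point_of convex hull S"
  obtains c where "\<And>u. u \<in> S \<Longrightarrow> u \<noteq> v \<Longrightarrow> c \<bullet> u < c \<bullet> v"
proof -
  have "{v} exposed_face_of convex hull S"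
    using v exposed_face_of_polyhedron[OF polytope_imp_polyhedron[OF polytope_convex_hull[OF fin]]]
    by (simp add: face_of_singleton)
  then obtain a b where ab: "convex hull S \<subseteq> {x. a \<bullet> x \<le> b}" "{v} = convex hull S \<inter> {x. a \<bullet> x = b}"
    unfolding exposed_face_of_def by auto
  have "a \<bullet> u < a \<bullet> v" if "u \<in> S" "u \<noteq> v" for u
  proof -
    have "u \<in> convex hull S" using that hull_subset[of S convex] by auto
    then have "a \<bullet> u \<le> b" "a \<bullet> u \<noteq> b" "a \<bullet> v = b" using ab that by blast+
    then show ?thesis by simp
  qed
  then show ?thesis using that by blast
qed

definition sweep_order :: "'a::real_inner \<Rightarrow> 'a set \<Rightarrow> (nat \<Rightarrow> 'a) \<Rightarrow> bool" where
  "sweep_order c A p \<longleftrightarrow>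
     bij_betw p {..<card A} A \<and> (\<forall>i j. i < j \<longrightarrow> j < card A \<longrightarrow> c \<bullet> p j < c \<bullet> p i)"

definition is_sweep :: "'a::real_inner set \<Rightarrow> (nat \<Rightarrow> 'a) \<Rightarrow> bool" where
  "is_sweep A p \<longleftrightarrow> (\<exists>c. sweep_order c A p)"

definition sweep_point :: "'a::real_vector set \<Rightarrow> (nat \<Rightarrow> real) \<Rightarrow> (nat \<Rightarrow> 'a) \<Rightarrow> 'a" where
  "sweep_point A w p = (\<Sum>i<card A. w i *\<^sub>R p i)"

lemma sweep_point_cong: "(\<And>i. i < card A \<Longrightarrow> p i = q i) \<Longrightarrow> sweep_point A w p = sweep_point A w q"
  unfolding sweep_point_def by (intro sum.cong) auto

lemma sweep_polytope_eq: "sweep_polytope A w = convex hull {sweep_point A w p | p. bij_betw p {..<card A} A}"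
  unfolding sweep_polytope_def sweep_point_def by simp

lemma finite_sweep_points:
  assumes "finite A"
  shows "finite {sweep_point A w p | p. bij_betw p {..<card A} A}"
proof -
  have "{sweep_point A w p | p. bij_betw p {..<card A} A} \<subseteq> sweep_point A w ` ({..<card A} \<rightarrow>\<^sub>E A)"
  proof
    fix x assume "x \<in> {sweep_point A w p | p. bij_betw p {..<card A} A}"
    then obtain p where p: "bij_betw p {..<card A} A" "x = sweep_point A w p" by blast
    then have "restrict p {..<card A} \<in> {..<card A} \<rightarrow>\<^sub>E A"
      and "sweep_point A w (restrict p {..<card A}) = x"
      by (auto simp: bij_betw_def intro: sweep_point_cong)
    then show "x \<in> sweep_point A w ` ({..<card A} \<rightarrow>\<^sub>E A)" by (metis image_eqI)
  qed
  then show ?thesis using assms by (meson finite_PiE finite_imageI finite_lessThan finite_subset)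
qed

lemma sweep_order_exists:
  fixes c :: "'a::real_inner"
  assumes fin: "finite A" and inj: "inj_on (\<lambda>u. c \<bullet> u) A"
  obtains p where "sweep_order c A p"
proof -
  define f where "f u = c \<bullet> u" for u
  define n where "n = card A"
  define xs where "xs = sorted_list_of_set (f ` A)"
  have injf: "inj_on f A" using inj unfolding f_def by simp
  have lxs: "length xs = n" and sxs: "set xs = f ` A"
    unfolding xs_def n_def using fin card_image[OF injf] by simp_all
  have str: "sorted_wrt (<) xs" unfolding xs_def by (rule strict_sorted_list_of_set)
  define p where "p i = the_inv_into A f (xs ! (n - 1 - i))" for i
  have xsA: "xs ! (n - 1 - i) \<in> f ` A" if "i < n" for i
    using that lxs sxs by (metis diff_less_Suc less_nat_zero_code nth_mem Suc_pred' not_gr_zero)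
  have pA: "p i \<in> A" and fp: "f (p i) = xs ! (n - 1 - i)" if "i < n" for i
    unfolding p_def using xsA[OF that] the_inv_into_into[OF injf] f_the_inv_into_f[OF injf] by blast+
  have dec: "f (p j) < f (p i)" if "i < j" "j < n" for i j
    using sorted_wrt_nth_less[OF str, of "n - 1 - j" "n - 1 - i"] that lxs fp by simp
  have injp: "inj_on p {..<n}"
    by (rule inj_onI) (metis dec lessThan_iff linorder_neqE_nat order_less_irrefl)
  have "p ` {..<n} = A"
    using pA fin card_image[OF injp] by (intro card_subset_eq) (auto simp: n_def)
  then show ?thesis
    using that injp dec unfolding sweep_order_def bij_betw_def n_def f_def by blast
qed

lemma sweep_point_max:
  assumes fin: "finite A" and w: "admissible_weights (card A) w"
    and p: "sweep_order c A p" and q: "bij_betw q {..<card A} A"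
  shows "c \<bullet> sweep_point A w q \<le> c \<bullet> sweep_point A w p"
    and "\<exists>i<card A. q i \<noteq> p i \<Longrightarrow> c \<bullet> sweep_point A w q < c \<bullet> sweep_point A w p"
proof -
  have wd: "\<And>i j. i < j \<Longrightarrow> j < card A \<Longrightarrow> w j < w i" and wp: "\<And>i. i < card A \<Longrightarrow> 0 < w i"
    using w unfolding admissible_weights_def by auto
  have pb: "bij_betw p {..<card A} A" and dec: "\<And>i j. i < j \<Longrightarrow> j < card A \<Longrightarrow> c \<bullet> p j < c \<bullet> p i"
    using p unfolding sweep_order_def by auto
  have inner: "c \<bullet> sweep_point A w r = (\<Sum>i<card A. w i * (c \<bullet> r i))" for r
    unfolding sweep_point_def by (simp add: inner_sum_right)
  show "c \<bullet> sweep_point A w q \<le> c \<bullet> sweep_point A w p"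
    and "\<exists>i<card A. q i \<noteq> p i \<Longrightarrow> c \<bullet> sweep_point A w q < c \<bullet> sweep_point A w p"
    unfolding inner using weighted_sum_le_sorted[where f="\<lambda>u. c \<bullet> u", OF fin pb q dec wd wp] by simp_all
qed

lemma sweep_point_inj:
  assumes "finite A" and "admissible_weights (card A) w" and "is_sweep A p"
    and q: "bij_betw q {..<card A} A" and "sweep_point A w q = sweep_point A w p"
  shows "\<forall>i<card A. q i = p i"
  using assms sweep_point_max(2)[OF assms(1,2) _ q] unfolding is_sweep_def by fastforce

lemma sweep_point_extreme:
  fixes A :: "'a::euclidean_space set"
  assumes fin: "finite A" and w: "admissible_weights (card A) w" and p: "sweep_order c A p"
  shows "sweep_point A w p extreme_point_of sweep_polytope A w"
  unfolding sweep_polytope_eq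
proof (rule extreme_point_of_convex_hull_if_unique_max[where c=c])
  show "finite {sweep_point A w p | p. bij_betw p {..<card A} A}"
    using finite_sweep_points[OF fin] .
  show "sweep_point A w p \<in> {sweep_point A w p | p. bij_betw p {..<card A} A}"
    using p unfolding sweep_order_def by blast
  fix u assume "u \<in> {sweep_point A w p | p. bij_betw p {..<card A} A}" "u \<noteq> sweep_point A w p"
  then obtain q where q: "bij_betw q {..<card A} A" "u = sweep_point A w q" "u \<noteq> sweep_point A w p"
    by blast
  then have "\<exists>i<card A. q i \<noteq> p i" using sweep_point_cong[of A q p w] by auto
  then show "c \<bullet> u < c \<bullet> sweep_point A w p" using sweep_point_max(2)[OF fin w p q(1)] q(2) by simp
qed

lemma small_perturbation_keeps_strict_order:
  fixes c g :: "'a::real_inner"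
  assumes fin: "finite X"
  obtains \<epsilon> where "0 < \<epsilon>"
    and "\<And>u v. u \<in> X \<Longrightarrow> v \<in> X \<Longrightarrow> c \<bullet> u < c \<bullet> v \<Longrightarrow> (c + \<epsilon> *\<^sub>R g) \<bullet> u < (c + \<epsilon> *\<^sub>R g) \<bullet> v"
proof -
  define gaps where "gaps = insert 1 {c \<bullet> v - c \<bullet> u | u v. u \<in> X \<and> v \<in> X \<and> c \<bullet> u < c \<bullet> v}"
  define \<delta> where "\<delta> = Min gaps"
  define K where "K = (\<Sum>u\<in>X. \<bar>g \<bullet> u\<bar>)"
  define \<epsilon> where "\<epsilon> = \<delta> / (2 * K + 1)"
  have "gaps \<subseteq> insert 1 ((\<lambda>(u, v). c \<bullet> v - c \<bullet> u) ` (X \<times> X))" unfolding gaps_def by auto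
  then have fin_gaps: "finite gaps" using fin by (meson finite_SigmaI finite_imageI finite_insert finite_subset)
  have \<delta>: "0 < \<delta>" "\<And>d. d \<in> gaps \<Longrightarrow> \<delta> \<le> d"
    unfolding \<delta>_def using fin_gaps by (auto simp: gaps_def)
  have K: "0 \<le> K" "\<And>u. u \<in> X \<Longrightarrow> \<bar>g \<bullet> u\<bar> \<le> K"
    unfolding K_def using fin by (auto intro: sum_nonneg member_le_sum)
  have \<epsilon>: "0 < \<epsilon>" "\<epsilon> * (2 * K) < \<delta>"
    unfolding \<epsilon>_def using \<delta> K by (auto simp: field_simps)
  have "(c + \<epsilon> *\<^sub>R g) \<bullet> u < (c + \<epsilon> *\<^sub>R g) \<bullet> v"
    if uv: "u \<in> X" "v \<in> X" "c \<bullet> u < c \<bullet> v" for u v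
  proof -
    have "\<delta> \<le> c \<bullet> v - c \<bullet> u" using uv by (intro \<delta>(2)) (auto simp: gaps_def)
    moreover have "\<epsilon> * (g \<bullet> u - g \<bullet> v) \<le> \<epsilon> * (2 * K)"
      using K(2)[OF uv(1)] K(2)[OF uv(2)] \<epsilon>(1) by (intro mult_left_mono) auto
    ultimately show ?thesis using \<epsilon>(2) by (simp add: algebra_simps)
  qed
  then show ?thesis using that \<epsilon>(1) by blast
qed

text \<open>Adding to a functional that exposes the vertex a small multiple of a functional g injective
  on A gives a functional that is injective on A and still exposes the vertex.\<close>
lemma extreme_point_sweep_point:
  fixes A :: "'a::euclidean_space set"
  assumes fin: "finite A" and w: "admissible_weights (card A) w"
    and g: "inj_on (\<lambda>u. g \<bullet> u) A"
    and v: "v extreme_point_of sweep_polytope A w"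
  obtains p where "is_sweep A p" and "v = sweep_point A w p"
proof -
  define S where "S = {sweep_point A w p | p. bij_betw p {..<card A} A}"
  have finS: "finite S" unfolding S_def using finite_sweep_points[OF fin] .
  have vS: "v \<in> S" using extreme_point_of_convex_hull v unfolding S_def sweep_polytope_eq by blast
  obtain c where c: "\<And>u. u \<in> S \<Longrightarrow> u \<noteq> v \<Longrightarrow> c \<bullet> u < c \<bullet> v"
    using extreme_point_of_convex_hull_unique_max[OF finS] v unfolding S_def sweep_polytope_eq by blast
  obtain \<epsilon> where \<epsilon>: "0 < \<epsilon>" and keep: "\<And>u u'. u \<in> A \<union> S \<Longrightarrow> u' \<in> A \<union> S \<Longrightarrow> c \<bullet> u < c \<bullet> u' \<Longrightarrow>
      (c + \<epsilon> *\<^sub>R g) \<bullet> u < (c + \<epsilon> *\<^sub>R g) \<bullet> u'"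
    using small_perturbation_keeps_strict_order[of "A \<union> S" c g] fin finS by auto
  define c' where "c' = c + \<epsilon> *\<^sub>R g"
  have "inj_on (\<lambda>u. c' \<bullet> u) A"
  proof (rule inj_onI)
    fix u u' assume u: "u \<in> A" "u' \<in> A" "c' \<bullet> u = c' \<bullet> u'"
    then have "c \<bullet> u = c \<bullet> u'" using keep[of u u'] keep[of u' u] unfolding c'_def by force
    then have "g \<bullet> u = g \<bullet> u'" using u(3) \<epsilon> unfolding c'_def by (simp add: inner_add_left)
    then show "u = u'" using g u by (auto dest: inj_onD)
  qed
  then obtain p where p: "sweep_order c' A p" using sweep_order_exists[OF fin] by blast
  have pS: "sweep_point A w p \<in> S" using p unfolding S_def sweep_order_def by blast
  have "sweep_point A w p = v"
  proof (rule ccontr)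
    assume "sweep_point A w p \<noteq> v"
    then have "c' \<bullet> sweep_point A w p < c' \<bullet> v" using keep pS vS c unfolding c'_def by blast
    moreover obtain q where "bij_betw q {..<card A} A" "v = sweep_point A w q" using vS unfolding S_def by blast
    ultimately show False using sweep_point_max(1)[OF fin w p] by fastforce
  qed
  then show ?thesis using that p unfolding is_sweep_def by blast
qed

lemma extreme_points_sweep_polytope:
  fixes A :: "'a::euclidean_space set"
  assumes "finite A" and "admissible_weights (card A) w" and "inj_on (\<lambda>u. g \<bullet> u) A"
  shows "{v. v extreme_point_of sweep_polytope A w} = sweep_point A w ` {p. is_sweep A p}"
  using extreme_point_sweep_point[OF assms] sweep_point_extreme[OF assms(1,2)]
  unfolding is_sweep_def by blast

abbreviation Vtx :: "((real^2) \<times> (real^'m::finite)) set" where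
  "Vtx \<equiv> prod_simplex_vertices"

abbreviation vtx :: "2 \<Rightarrow> 'm::finite \<Rightarrow> (real^2) \<times> (real^'m)" where
  "vtx a b \<equiv> (axis a 1, axis b 1)"

lemma mem_Vtx: "u \<in> Vtx \<longleftrightarrow> (\<exists>a b. u = vtx a b)"
  unfolding prod_simplex_vertices_def by auto

lemma vtx_in_Vtx [simp]: "vtx a b \<in> Vtx"
  unfolding mem_Vtx by blast

lemma axis_one_eq_iff [simp]: "axis a (1::real) = axis a' 1 \<longleftrightarrow> a = a'"
  by (simp add: axis_eq_axis)

lemma Vtx_eq: "Vtx = (\<lambda>(a, b). vtx a b) ` UNIV"
  unfolding prod_simplex_vertices_def by auto

lemma finite_Vtx [simp]: "finite (Vtx :: ((real^2) \<times> (real^'m::finite)) set)"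
  unfolding Vtx_eq by simp

lemma inj_on_VtxI:
  assumes "\<And>a b a' b'. f (vtx a b) = f (vtx a' b') \<Longrightarrow> a = a' \<and> b = b'"
  shows "inj_on f Vtx"
proof (rule inj_onI)
  fix u v assume "u \<in> Vtx" "v \<in> Vtx" "f u = f v"
  then show "u = v" using assms unfolding mem_Vtx by blast
qed

lemma card_Vtx: "card (Vtx :: ((real^2) \<times> (real^'m::finite)) set) = 2 * CARD('m)"
proof -
  have "inj (\<lambda>(a, b). vtx a b :: (real^2) \<times> (real^'m))" by (auto simp: inj_def)
  then show ?thesis unfolding Vtx_eq by (simp add: card_image card_cartesian_product)
qed

lemma inner_vtx: "c \<bullet> vtx a b = fst c $ a + snd c $ b"
  by (cases c) (simp add: inner_axis)

lemma inj_on_inner_Vtx: "\<exists>g::(real^2) \<times> (real^'m::finite). inj_on (\<lambda>u. g \<bullet> u) Vtx"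
proof -
  obtain e :: "'m \<Rightarrow> nat" where e: "inj e" using finite_imp_inj_to_nat_seg[of "UNIV :: 'm set"] by auto
  define g :: "(real^2) \<times> (real^'m)" where "g = ((\<chi> a. if a = 1 then 0 else 1/2), (\<chi> b. real (e b)))"
  have gv: "g \<bullet> vtx a b = (if a = 1 then 0 else 1/2) + real (e b)" for a b
    unfolding inner_vtx g_def by simp
  have "a = a' \<and> b = b'" if "g \<bullet> vtx a b = g \<bullet> vtx a' b'" for a a' b b'
  proof -
    have eq: "2 * real (e b) + (if a = 1 then 0 else 1) = 2 * real (e b') + (if a' = 1 then 0 else 1)"
      using that unfolding gv by (simp split: if_splits)
    then have "2 * e b + (if a = 1 then 0 else 1) = 2 * e b' + (if a' = 1 then 0 else (1::nat))"
      by (simp split: if_splits)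
    then have "e b = e b' \<and> (a = 1 \<longleftrightarrow> a' = 1)" by (simp split: if_splits; presburger)
    then show ?thesis using e exhaust_2[of a] exhaust_2[of a'] by (auto simp: inj_eq)
  qed
  then show ?thesis using inj_on_VtxI by blast
qed

lemma perm_act_vtx:
  assumes s: "s permutes UNIV" and t: "t permutes UNIV"
  shows "perm_act (s, t) (vtx a b) = vtx (inv s a) (inv t b)"
proof -
  have "s i = a \<longleftrightarrow> i = inv s a" "t j = b \<longleftrightarrow> j = inv t b" for i j
    using permutes_inverses[OF s] permutes_inverses[OF t] by metis+
  then show ?thesis unfolding perm_act_def by (simp add: vec_eq_iff axis_def)
qed

lemma perm_act_inner_vtx:
  assumes s: "s permutes UNIV" and t: "t permutes UNIV"
  shows "perm_act (s, t) c \<bullet> perm_act (s, t) (vtx a b) = c \<bullet> vtx a b"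
  unfolding perm_act_vtx[OF s t] inner_vtx
  by (simp add: perm_act_def permutes_inverses[OF s] permutes_inverses[OF t])

lemma perm_act_sum: "perm_act g (\<Sum>i\<in>I. r i *\<^sub>R x i) = (\<Sum>i\<in>I. r i *\<^sub>R perm_act g (x i))"
  unfolding perm_act_def by (simp add: vec_eq_iff fst_sum snd_sum prod_eq_iff)

lemma perm_act_comp: "perm_act (s2, t2) (perm_act (s1, t1) x) = perm_act (s1 \<circ> s2, t1 \<circ> t2) x"
  unfolding perm_act_def by (simp add: vec_eq_iff)

lemma perm_act_id: "perm_act (id, id) x = x"
  unfolding perm_act_def by (simp add: vec_eq_iff prod_eq_iff)

lemma bij_betw_perm_act_Vtx:
  assumes "g \<in> perm_group"
  shows "bij_betw (perm_act g) Vtx Vtx"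
proof -
  obtain s t where st: "g = (s, t)" "s permutes UNIV" "t permutes UNIV"
    using assms unfolding perm_group_def by auto
  have "perm_act g ` Vtx \<subseteq> Vtx"
  proof
    fix x assume "x \<in> perm_act g ` Vtx"
    then obtain a b where "x = perm_act g (vtx a b)" by (auto simp: mem_Vtx)
    then show "x \<in> Vtx" using perm_act_vtx[OF st(2,3)] st(1) by simp
  qed
  moreover have "inj_on (perm_act g) Vtx"
    using perm_act_vtx[OF st(2,3)] permutes_inj[OF permutes_inv[OF st(2)]] permutes_inj[OF permutes_inv[OF st(3)]]
    unfolding st(1) by (intro inj_on_VtxI) (simp add: inj_eq)
  ultimately show ?thesis
    by (simp add: bij_betw_def card_image card_subset_eq)
qed

lemma eq_if_neq_same_2: "(a::2) \<noteq> r \<Longrightarrow> b \<noteq> r \<Longrightarrow> a = b"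
  using exhaust_2[of a] exhaust_2[of b] exhaust_2[of r] by auto

definition row_of :: "(real^2) \<times> (real^'m::finite) \<Rightarrow> 2" where
  "row_of u = (SOME a. fst u $ a = 1)"

definition col_of :: "(real^2) \<times> (real^'m::finite) \<Rightarrow> 'm" where
  "col_of u = (SOME b. snd u $ b = 1)"

lemma row_vtx [simp]: "row_of (vtx a b :: (real^2) \<times> (real^'m::finite)) = a"
  and col_vtx [simp]: "col_of (vtx a b :: (real^2) \<times> (real^'m::finite)) = b"
  unfolding row_of_def col_of_def by (simp_all add: axis_def)

lemma vtx_row_col: "u \<in> Vtx \<Longrightarrow> vtx (row_of u) (col_of u) = u"
  unfolding mem_Vtx by auto

definition rank_above :: "real^'m::finite \<Rightarrow> 'm \<Rightarrow> nat" where
  "rank_above y b = card {b'. y $ b < y $ b'}"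

lemma rank_above_bij:
  fixes y :: "real^'m::finite"
  assumes inj: "\<And>b b'. y $ b = y $ b' \<Longrightarrow> b = b'"
  shows "bij_betw (rank_above y) UNIV {..<CARD('m)}"
proof -
  have less: "rank_above y b' < rank_above y b" if "y $ b < y $ b'" for b b'
  proof -
    have "insert b' {c. y $ b' < y $ c} \<subseteq> {c. y $ b < y $ c}" using that by auto
    then have "card (insert b' {c. y $ b' < y $ c}) \<le> card {c. y $ b < y $ c}"
      by (intro card_mono) auto
    then show ?thesis unfolding rank_above_def by simp
  qed
  have injr: "inj (rank_above y)"
  proof (rule injI)
    fix b b' assume "rank_above y b = rank_above y b'"
    then have "\<not> y $ b < y $ b'" "\<not> y $ b' < y $ b" using less[of b b'] less[of b' b] by auto
    then show "b = b'" using inj by simp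
  qed
  have "rank_above y b < CARD('m)" for b
    unfolding rank_above_def by (rule psubset_card_mono) auto
  then have "range (rank_above y) \<subseteq> {..<CARD('m)}" by auto
  moreover have "card (range (rank_above y)) = CARD('m)" using card_image[OF injr] by simp
  ultimately show ?thesis using injr by (simp add: bij_betw_def card_subset_eq)
qed

definition prefix_dominated :: "bool list \<Rightarrow> bool" where
  "prefix_dominated bs \<longleftrightarrow>
     (\<forall>l\<le>length bs. count_list (take l bs) False \<le> count_list (take l bs) True)"

definition ballot_paths :: "nat \<Rightarrow> nat \<Rightarrow> bool list set" where
  "ballot_paths a b = {bs. count_list bs True = a \<and> count_list bs False = b \<and> prefix_dominated bs}"

lemma count_list_True_False: "count_list bs True + count_list bs False = length bs"
  by (induction bs) auto

lemma count_list_le_if_prefix_dominated: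
  "prefix_dominated bs \<Longrightarrow> count_list bs False \<le> count_list bs True"
  unfolding prefix_dominated_def by (metis order_refl take_all)

lemma prefix_dominated_Nil [simp]: "prefix_dominated []"
  unfolding prefix_dominated_def by simp

lemma prefix_dominated_snoc:
  "prefix_dominated (bs @ [x]) \<longleftrightarrow>
     prefix_dominated bs \<and> count_list (bs @ [x]) False \<le> count_list (bs @ [x]) True"
  unfolding prefix_dominated_def
  by (auto simp del: count_list_append simp add: le_Suc_eq)

text \<open>For a sweep, the row word is the standard Young tableau of shape 2 x (f+1) written as a
  ballot sequence.\<close>
definition row_word :: "(nat \<Rightarrow> (real^2) \<times> (real^'m::finite)) \<Rightarrow> bool list" where
  "row_word p = map (\<lambda>i. row_of (p i) = row_of (p 0)) [0..<2 * CARD('m)]"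

lemma row_word_cong:
  fixes p q :: "nat \<Rightarrow> (real^2) \<times> (real^'m::finite)"
  shows "(\<And>i. i < 2 * CARD('m) \<Longrightarrow> (row_of (p i) = row_of (p 0)) = (row_of (q i) = row_of (q 0))) \<Longrightarrow>
    row_word p = row_word q"
  unfolding row_word_def by (intro map_cong) auto

locale product_sweep =
  fixes p :: "nat \<Rightarrow> (real^2) \<times> (real^'m::finite)" and c :: "(real^2) \<times> (real^'m)"
  assumes sweep: "sweep_order c Vtx p"
begin

lemma p_bij: "bij_betw p {..<2 * CARD('m)} Vtx"
  and p_dec: "i < j \<Longrightarrow> j < 2 * CARD('m) \<Longrightarrow> c \<bullet> p j < c \<bullet> p i"
  using sweep unfolding sweep_order_def card_Vtx by auto

lemma p_in: "i < 2 * CARD('m) \<Longrightarrow> p i \<in> Vtx"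
  using p_bij by (auto simp: bij_betw_def)

lemma p_inj: "i < 2 * CARD('m) \<Longrightarrow> j < 2 * CARD('m) \<Longrightarrow> p i = p j \<Longrightarrow> i = j"
  using p_bij by (auto simp: bij_betw_def dest: inj_onD)

lemma p_onto:
  obtains i where "i < 2 * CARD('m)" "p i = vtx a b"
proof -
  have "vtx a b \<in> p ` {..<2 * CARD('m)}" using p_bij by (simp add: bij_betw_def)
  then show ?thesis using that by auto
qed

lemma p_vtx: "i < 2 * CARD('m) \<Longrightarrow> p i = vtx (row_of (p i)) (col_of (p i))"
  using vtx_row_col[OF p_in] by simp

lemma inner_p: "i < 2 * CARD('m) \<Longrightarrow> c \<bullet> p i = fst c $ row_of (p i) + snd c $ col_of (p i)"
  using p_vtx inner_vtx by metis

lemma eq_if_row_col_eq: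
  assumes "i < 2 * CARD('m)" "j < 2 * CARD('m)"
    and "row_of (p i) = row_of (p j)" "col_of (p i) = col_of (p j)"
  shows "i = j"
proof -
  from p_vtx[OF assms(1)] p_vtx[OF assms(2)] assms(3,4) have "p i = p j" by argo
  then show ?thesis using p_inj assms(1,2) by blast
qed

lemma p_dec_iff: "i < 2 * CARD('m) \<Longrightarrow> j < 2 * CARD('m) \<Longrightarrow> c \<bullet> p j < c \<bullet> p i \<longleftrightarrow> i < j"
  using p_dec by (metis less_asym not_less_iff_gr_or_eq)

lemma inj_col_values: "snd c $ b = snd c $ b' \<Longrightarrow> b = b'"
proof -
  assume eq: "snd c $ b = snd c $ b'"
  obtain i where i: "i < 2 * CARD('m)" "p i = vtx 1 b" by (rule p_onto)
  obtain j where j: "j < 2 * CARD('m)" "p j = vtx 1 b'" by (rule p_onto)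
  note ij = i j
  then have "c \<bullet> p i = c \<bullet> p j" using eq by (simp add: inner_vtx)
  then have "i = j" using p_dec_iff[of i j] p_dec_iff[of j i] ij by (cases i j rule: linorder_cases) auto
  then show "b = b'" using ij by simp
qed

lemma first_row_max: "a \<noteq> row_of (p 0) \<Longrightarrow> fst c $ a < fst c $ row_of (p 0)"
proof -
  assume a: "a \<noteq> row_of (p 0)"
  obtain j where j: "j < 2 * CARD('m)" "p j = vtx a (col_of (p 0))" by (rule p_onto)
  then have "row_of (p j) \<noteq> row_of (p 0)" using a by simp
  then have "j \<noteq> 0" by (intro notI) simp
  then have "c \<bullet> p j < c \<bullet> p 0" using p_dec[of 0 j] j by simp
  then show ?thesis using j inner_p[of 0] by (simp add: inner_vtx)
qed

text \<open>Within a row, the sweep visits the vertices in decreasing order of their column value.\<close>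
lemma card_earlier_same_row:
  assumes i: "i < 2 * CARD('m)"
  shows "card {j. j < i \<and> row_of (p j) = row_of (p i)} = rank_above (snd c) (col_of (p i))"
proof -
  define a where "a = row_of (p i)"
  have "bij_betw (\<lambda>j. col_of (p j)) {j. j < i \<and> row_of (p j) = a} {b'. snd c $ col_of (p i) < snd c $ b'}"
    unfolding bij_betw_def
  proof
    show "inj_on (\<lambda>j. col_of (p j)) {j. j < i \<and> row_of (p j) = a}"
      using i eq_if_row_col_eq by (intro inj_onI) auto
    show "(\<lambda>j. col_of (p j)) ` {j. j < i \<and> row_of (p j) = a} = {b'. snd c $ col_of (p i) < snd c $ b'}"
    proof (intro equalityI subsetI)
      fix x assume "x \<in> (\<lambda>j. col_of (p j)) ` {j. j < i \<and> row_of (p j) = a}"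
      then obtain j where j: "j < i" "row_of (p j) = a" "x = col_of (p j)" by blast
      then show "x \<in> {b'. snd c $ col_of (p i) < snd c $ b'}"
        using p_dec[of j i] i inner_p[of i] inner_p[of j] unfolding a_def by simp
    next
      fix x assume x: "x \<in> {b'. snd c $ col_of (p i) < snd c $ b'}"
      obtain j where j: "j < 2 * CARD('m)" "p j = vtx a x" by (rule p_onto)
      then have "c \<bullet> p i < c \<bullet> p j" using x inner_p[OF i] unfolding a_def by (simp add: inner_vtx)
      then have "j < i" using p_dec_iff[OF j(1) i] by simp
      then show "x \<in> (\<lambda>j. col_of (p j)) ` {j. j < i \<and> row_of (p j) = a}" using j by force
    qed
  qed
  then show ?thesis unfolding rank_above_def a_def by (rule bij_betw_same_card)
qed

lemma count_list_take_row_word: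
  assumes "l \<le> 2 * CARD('m)"
  shows "count_list (take l (row_word p)) x = card {i. i < l \<and> (row_of (p i) = row_of (p 0)) = x}"
proof -
  have "take l (row_word p) = map (\<lambda>i. row_of (p i) = row_of (p 0)) [0..<l]"
    unfolding row_word_def using assms by (simp add: take_map)
  then show ?thesis
    by (simp add: count_list_eq_length_filter length_filter_conv_card) (intro arg_cong[where f=card]; auto)
qed

lemma card_row: "card {i. i < 2 * CARD('m) \<and> row_of (p i) = a} = CARD('m)"
proof -
  have "bij_betw (\<lambda>i. col_of (p i)) {i. i < 2 * CARD('m) \<and> row_of (p i) = a} UNIV"
    unfolding bij_betw_def
  proof
    show "inj_on (\<lambda>i. col_of (p i)) {i. i < 2 * CARD('m) \<and> row_of (p i) = a}"
      using eq_if_row_col_eq by (intro inj_onI) auto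
    show "(\<lambda>i. col_of (p i)) ` {i. i < 2 * CARD('m) \<and> row_of (p i) = a} = UNIV"
    proof (intro equalityI subsetI)
      fix b :: 'm
      obtain i where "i < 2 * CARD('m)" "p i = vtx a b" using p_onto .
      then show "b \<in> (\<lambda>i. col_of (p i)) ` {i. i < 2 * CARD('m) \<and> row_of (p i) = a}" by force
    qed simp
  qed
  then show ?thesis by (simp add: bij_betw_same_card)
qed

text \<open>Each vertex outside the first row is preceded by the vertex of the first row in its column.\<close>
lemma other_row_le_first_row:
  assumes l: "l \<le> 2 * CARD('m)"
  shows "card {i. i < l \<and> row_of (p i) \<noteq> row_of (p 0)} \<le> card {i. i < l \<and> row_of (p i) = row_of (p 0)}"
proof -
  define r where "r = row_of (p 0)"
  define h where "h j = (SOME i. i < 2 * CARD('m) \<and> p i = vtx r (col_of (p j)))" for j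
  have "\<exists>i. i < 2 * CARD('m) \<and> p i = vtx r (col_of (p j))" for j
    by (rule p_onto[of r "col_of (p j)"]) blast
  then have "h j < 2 * CARD('m) \<and> p (h j) = vtx r (col_of (p j))" for j
    unfolding h_def by (rule someI_ex)
  then have hp: "h j < 2 * CARD('m)" "p (h j) = vtx r (col_of (p j))" for j
    by auto
  have h_less: "h j < j" if "j < 2 * CARD('m)" "row_of (p j) \<noteq> r" for j
  proof -
    have "c \<bullet> p j = fst c $ row_of (p j) + snd c $ col_of (p j)" using inner_p that by simp
    also have "\<dots> < c \<bullet> p (h j)"
      using first_row_max[of "row_of (p j)"] that hp unfolding r_def by (simp add: inner_vtx)
    finally show ?thesis using p_dec_iff[OF hp(1) that(1)] by simp
  qed
  have "inj_on h {i. i < l \<and> row_of (p i) \<noteq> r}"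
  proof (rule inj_onI)
    fix j j' assume jj: "j \<in> {i. i < l \<and> row_of (p i) \<noteq> r}" "j' \<in> {i. i < l \<and> row_of (p i) \<noteq> r}" "h j = h j'"
    then have "col_of (p j) = col_of (p j')" using hp[of j] hp[of j'] by simp
    moreover have "row_of (p j) = row_of (p j')" using jj eq_if_neq_same_2 by auto
    moreover have "j < 2 * CARD('m)" "j' < 2 * CARD('m)" using jj l by auto
    ultimately show "j = j'" using eq_if_row_col_eq by blast
  qed
  moreover have "h ` {i. i < l \<and> row_of (p i) \<noteq> r} \<subseteq> {i. i < l \<and> row_of (p i) = r}"
  proof (intro image_subsetI CollectI conjI)
    fix j assume j: "j \<in> {i. i < l \<and> row_of (p i) \<noteq> r}"
    show "h j < l" using h_less[of j] j l by force
    show "row_of (p (h j)) = r" using hp by simp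
  qed
  ultimately show ?thesis unfolding r_def by (intro card_inj_on_le) auto
qed

lemma row_word_ballot: "row_word p \<in> ballot_paths CARD('m) CARD('m)"
proof -
  have len: "length (row_word p) = 2 * CARD('m)" unfolding row_word_def by simp
  have T: "count_list (row_word p) True = CARD('m)"
    using count_list_take_row_word[of "2 * CARD('m)" True] card_row[of "row_of (p 0)"] len by simp
  moreover have "count_list (row_word p) False = CARD('m)"
    using count_list_True_False[of "row_word p"] T len by simp
  moreover have "prefix_dominated (row_word p)"
    unfolding prefix_dominated_def len
    using count_list_take_row_word other_row_le_first_row by simp
  ultimately show ?thesis unfolding ballot_paths_def by simp
qed

end

lemma row_of_perm_act:
  assumes "s permutes UNIV" "t permutes UNIV" "u \<in> Vtx"
  shows "row_of (perm_act (s, t) u) = inv s (row_of u)"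
  using perm_act_vtx[OF assms(1,2)] vtx_row_col[OF assms(3)] by (metis row_vtx)

lemma product_sweep_perm_act:
  fixes p :: "nat \<Rightarrow> (real^2) \<times> (real^'m::finite)"
  assumes ps: "product_sweep p c" and g: "g \<in> perm_group"
  shows "product_sweep (perm_act g \<circ> p) (perm_act g c)"
proof -
  interpret product_sweep p c by (rule ps)
  obtain s t where st: "g = (s, t)" "s permutes UNIV" "t permutes UNIV"
    using g unfolding perm_group_def by auto
  have "perm_act g c \<bullet> perm_act g (p i) = c \<bullet> p i" if "i < 2 * CARD('m)" for i
    using p_vtx[OF that] perm_act_inner_vtx[OF st(2,3), of c] st(1) by metis
  then show ?thesis
    using bij_betw_trans[OF p_bij bij_betw_perm_act_Vtx[OF g]] p_dec
    unfolding product_sweep_def sweep_order_def card_Vtx by simp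
qed

lemma row_word_perm_act:
  fixes p :: "nat \<Rightarrow> (real^2) \<times> (real^'m::finite)"
  assumes ps: "product_sweep p c" and g: "g \<in> perm_group"
  shows "row_word (perm_act g \<circ> p) = row_word p"
proof -
  interpret product_sweep p c by (rule ps)
  obtain s t where st: "g = (s, t)" "s permutes UNIV" "t permutes UNIV"
    using g unfolding perm_group_def by auto
  have "inj (inv s)" using permutes_inj[OF permutes_inv[OF st(2)]] .
  then show ?thesis
    using row_of_perm_act[OF st(2,3) p_in] p_in[of 0] unfolding st(1)
    by (intro row_word_cong) (simp add: inj_eq)
qed

lemma transpose_2_eq: "(x = r \<longleftrightarrow> y = r') \<Longrightarrow> Transposition.transpose r r' x = (y::2)"
  using exhaust_2[of x] exhaust_2[of y] exhaust_2[of r] exhaust_2[of r'] by (auto simp: transpose_def)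

lemma eq_iff_2: "(x = r \<longleftrightarrow> x' = r') \<Longrightarrow> (y = r \<longleftrightarrow> y' = r') \<Longrightarrow> (x = y \<longleftrightarrow> x' = (y'::2))"
  for x y r :: 2
  using exhaust_2[of x] exhaust_2[of y] exhaust_2[of r] exhaust_2[of x'] exhaust_2[of y'] exhaust_2[of r']
  by auto

lemma (in product_sweep) row_word_nth:
  "i < 2 * CARD('m) \<Longrightarrow> row_word p ! i \<longleftrightarrow> row_of (p i) = row_of (p 0)"
  unfolding row_word_def by simp

lemma rank_above_col_eq_if_row_word_eq:
  fixes p p' :: "nat \<Rightarrow> (real^2) \<times> (real^'m::finite)"
  assumes ps: "product_sweep p c" and ps': "product_sweep p' c'" and eq: "row_word p = row_word p'"
    and i: "i < 2 * CARD('m)"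
  shows "rank_above (snd c) (col_of (p i)) = rank_above (snd c') (col_of (p' i))"
proof -
  have rw: "row_of (p j) = row_of (p 0) \<longleftrightarrow> row_of (p' j) = row_of (p' 0)" if "j < 2 * CARD('m)" for j
    using product_sweep.row_word_nth[OF ps that] product_sweep.row_word_nth[OF ps' that] eq by simp
  have "{j. j < i \<and> row_of (p j) = row_of (p i)} = {j. j < i \<and> row_of (p' j) = row_of (p' i)}"
  proof (rule Collect_cong)
    fix j
    have "row_of (p j) = row_of (p i) \<longleftrightarrow> row_of (p' j) = row_of (p' i)" if "j < i"
    proof -
      have "j < 2 * CARD('m)" using that i by simp
      then show ?thesis using eq_iff_2[OF rw[of j] rw[OF i]] by simp
    qed
    then show "(j < i \<and> row_of (p j) = row_of (p i)) \<longleftrightarrow> (j < i \<and> row_of (p' j) = row_of (p' i))"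
      by blast
  qed
  then show ?thesis
    using product_sweep.card_earlier_same_row[OF ps i] product_sweep.card_earlier_same_row[OF ps' i]
    by simp
qed

text \<open>Rows are matched by a transposition and columns by comparing their ranks within a row.\<close>
lemma perm_act_if_row_word_eq:
  fixes p p' :: "nat \<Rightarrow> (real^2) \<times> (real^'m::finite)"
  assumes ps: "product_sweep p c" and ps': "product_sweep p' c'" and eq: "row_word p = row_word p'"
  obtains g where "g \<in> perm_group" "\<And>i. i < 2 * CARD('m) \<Longrightarrow> p' i = perm_act g (p i)"
proof -
  interpret A: product_sweep p c by (rule ps)
  interpret B: product_sweep p' c' by (rule ps')
  define \<sigma> where "\<sigma> = Transposition.transpose (row_of (p 0)) (row_of (p' 0))"
  have \<sigma>1: "\<sigma> permutes UNIV" unfolding \<sigma>_def by (rule permutes_swap_id) auto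
  have \<sigma>2: "\<sigma> (row_of (p i)) = row_of (p' i)" if "i < 2 * CARD('m)" for i
    unfolding \<sigma>_def using A.row_word_nth[OF that] B.row_word_nth[OF that] eq
    by (intro transpose_2_eq) simp
  have r: "bij_betw (rank_above (snd c)) UNIV {..<CARD('m)}"
    "bij_betw (rank_above (snd c')) UNIV {..<CARD('m)}"
    using rank_above_bij A.inj_col_values B.inj_col_values by blast+
  define \<tau> where "\<tau> = the_inv_into UNIV (rank_above (snd c')) \<circ> rank_above (snd c)"
  have \<tau>1: "\<tau> permutes UNIV"
    unfolding \<tau>_def using bij_betw_trans[OF r(1) bij_betw_the_inv_into[OF r(2)]]
    by (intro bij_imp_permutes) auto
  have \<tau>2: "\<tau> (col_of (p i)) = col_of (p' i)" if "i < 2 * CARD('m)" for i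
    unfolding \<tau>_def using rank_above_col_eq_if_row_word_eq[OF ps ps' eq that]
    by (simp add: the_inv_into_f_f bij_betw_imp_inj_on[OF r(2)])
  have "p' i = perm_act (inv \<sigma>, inv \<tau>) (p i)" if "i < 2 * CARD('m)" for i
  proof -
    have "perm_act (inv \<sigma>, inv \<tau>) (p i) = vtx (\<sigma> (row_of (p i))) (\<tau> (col_of (p i)))"
      by (subst A.p_vtx[OF that])
        (simp add: perm_act_vtx permutes_inv \<sigma>1 \<tau>1 permutes_inv_inv[OF \<sigma>1] permutes_inv_inv[OF \<tau>1])
    also have "\<dots> = p' i" using \<sigma>2[OF that] \<tau>2[OF that] B.p_vtx[OF that, symmetric] by simp
    finally show ?thesis by (rule sym)
  qed
  moreover have "(inv \<sigma>, inv \<tau>) \<in> perm_group"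
    unfolding perm_group_def using permutes_inv[OF \<sigma>1] permutes_inv[OF \<tau>1] by simp
  ultimately show ?thesis using that by blast
qed

definition orbit :: "(real^2) \<times> (real^'m::finite) \<Rightarrow> ((real^2) \<times> (real^'m)) set" where
  "orbit v = (\<lambda>g. perm_act g v) ` perm_group"

lemma id_in_perm_group: "(id, id) \<in> perm_group"
  unfolding perm_group_def by simp

lemma in_orbit_self: "v \<in> orbit v"
  unfolding orbit_def using id_in_perm_group perm_act_id[of v, symmetric] by (rule rev_image_eqI)

lemma orbit_perm_act_subset: "g \<in> perm_group \<Longrightarrow> orbit (perm_act g v) \<subseteq> orbit v"
  unfolding orbit_def perm_group_def by (auto simp: perm_act_comp intro!: permutes_compose)

lemma orbit_perm_act: "g \<in> perm_group \<Longrightarrow> orbit (perm_act g v) = orbit v"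
proof -
  assume g: "g \<in> perm_group"
  then obtain s t where st: "g = (s, t)" "s permutes UNIV" "t permutes UNIV"
    unfolding perm_group_def by auto
  have "perm_act (inv s, inv t) (perm_act g v) = v"
    using st by (simp add: perm_act_comp permutes_inv_o perm_act_id)
  moreover have "(inv s, inv t) \<in> perm_group" using st by (simp add: perm_group_def permutes_inv)
  ultimately show ?thesis
    using orbit_perm_act_subset[OF g, of v] orbit_perm_act_subset[of "(inv s, inv t)" "perm_act g v"]
    by (intro equalityI) simp_all
qed

definition occ_before :: "bool list \<Rightarrow> nat \<Rightarrow> nat" where
  "occ_before bs i = count_list (take i bs) (bs ! i)"

text \<open>The functional value at position i of the sweep that realises bs: the rows get values 1
  (letter True) and 0 (letter False), and the column of the k-th occurrence of a letter gets
  value Y k.\<close>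
definition letter_value :: "(nat \<Rightarrow> real) \<Rightarrow> bool list \<Rightarrow> nat \<Rightarrow> real" where
  "letter_value Y bs i = (if bs ! i then 1 else 0) + Y (occ_before bs i)"

text \<open>The last clause reserves room for appending a False, whose value will be Y F.\<close>
definition realizes :: "(nat \<Rightarrow> real) \<Rightarrow> bool list \<Rightarrow> bool" where
  "realizes Y bs \<longleftrightarrow>
     (let T = count_list bs True; F = count_list bs False in
     (\<forall>k k'. k < k' \<longrightarrow> k' < T \<longrightarrow> Y k' < Y k) \<and>
     (\<forall>i j. i < j \<longrightarrow> j < length bs \<longrightarrow> letter_value Y bs j < letter_value Y bs i) \<and>
     (F < T \<longrightarrow> (\<forall>i<length bs. Y F < letter_value Y bs i) \<and> Y F < Y (T - 1) + 1))"

lemma occ_before_snoc: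
  "i < length bs \<Longrightarrow> occ_before (bs @ [x]) i = occ_before bs i"
  "occ_before (bs @ [x]) (length bs) = count_list bs x"
  unfolding occ_before_def by (simp_all add: nth_append)

lemma letter_value_snoc: "i < length bs \<Longrightarrow> letter_value Y (bs @ [x]) i = letter_value Y bs i"
  unfolding letter_value_def by (simp add: occ_before_snoc nth_append)

lemma occ_before_less: "i < length bs \<Longrightarrow> occ_before bs i < count_list bs (bs ! i)"
proof -
  assume i: "i < length bs"
  have "Suc (occ_before bs i) = count_list (take (Suc i) bs) (bs ! i)"
    using i unfolding occ_before_def by (simp add: take_Suc_conv_app_nth)
  also have "\<dots> \<le> count_list bs (bs ! i)"
    by (metis append_take_drop_id count_list_append le_add1)
  finally show ?thesis by simp
qed

lemma exists_between_finite:
  fixes l :: real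
  assumes "finite U" "\<And>u. u \<in> U \<Longrightarrow> l < u"
  obtains y where "l < y" "\<And>u. u \<in> U \<Longrightarrow> y < u"
proof -
  define m where "m = Min (insert (l + 1) U)"
  have "l < m" "\<And>u. u \<in> U \<Longrightarrow> m \<le> u" unfolding m_def using assms by auto
  then show ?thesis using that[of "(l + m) / 2"] by fastforce
qed

text \<open>Appending False needs no change: the invariant already reserves room for it.\<close>
lemma realizes_snoc_False:
  assumes Y: "realizes Y bs" and dom: "count_list bs False < count_list bs True"
  shows "realizes Y (bs @ [False])"
proof -
  define a where "a = count_list bs True"
  define b where "b = count_list bs False"
  have Y1: "\<And>k k'. k < k' \<Longrightarrow> k' < a \<Longrightarrow> Y k' < Y k"
   and Y2: "\<And>i j. i < j \<Longrightarrow> j < length bs \<Longrightarrow> letter_value Y bs j < letter_value Y bs i"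
   and Y3: "\<And>i. i < length bs \<Longrightarrow> Y b < letter_value Y bs i"
   and Y4: "Y b < Y (a - 1) + 1"
    using Y dom unfolding realizes_def a_def b_def Let_def by blast+
  have ba: "b < a" using dom unfolding a_def b_def .
  have last: "letter_value Y (bs @ [False]) (length bs) = Y b"
    unfolding letter_value_def by (simp add: occ_before_snoc b_def)
  have I2: "letter_value Y (bs @ [False]) j < letter_value Y (bs @ [False]) i"
    if "i < j" "j < length bs + 1" for i j
    using that last letter_value_snoc[of _ bs] Y2[of i j] Y3[of i] by (cases "j = length bs") auto
  have less_b: "Y (b + 1) < Y b" and le_top: "Y (a - 1) \<le> Y (b + 1)" if "b + 1 < a"
    using Y1[of b "b + 1"] Y1[of "b + 1" "a - 1"] that by (cases "b + 1 = a - 1"; auto simp: less_imp_le)+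
  have I3: "Y (b + 1) < letter_value Y (bs @ [False]) i" if "b + 1 < a" "i < length bs + 1" for i
    using that less_b last letter_value_snoc[of i bs] Y3[of i] by (cases "i = length bs") auto
  have I4: "Y (b + 1) < Y (a - 1) + 1" if "b + 1 < a"
    using less_b le_top Y4 that by fastforce
  show ?thesis
    unfolding realizes_def Let_def using Y1 I2 I3 I4 by (auto simp: a_def b_def)
qed

text \<open>Appending True assigns the new column a value y just below the previous ones and far
  enough below all values of bs; the invariant guarantees room above the next False.\<close>
lemma realizes_room_for_True:
  assumes Y: "realizes Y bs"
  obtains y where "0 < count_list bs True \<Longrightarrow> y < Y (count_list bs True - 1)"
    and "\<And>i. i < length bs \<Longrightarrow> y + 1 < letter_value Y bs i"
    and "count_list bs False < count_list bs True \<Longrightarrow> Y (count_list bs False) < y + 1"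
proof -
  define a where "a = count_list bs True"
  define b where "b = count_list bs False"
  have Y3: "\<And>i. b < a \<Longrightarrow> i < length bs \<Longrightarrow> Y b < letter_value Y bs i"
   and Y4: "b < a \<Longrightarrow> Y b < Y (a - 1) + 1"
    using Y unfolding realizes_def a_def b_def Let_def by blast+
  define U where "U = (if 0 < a then {Y (a - 1)} else {}) \<union> (\<lambda>i. letter_value Y bs i - 1) ` {..<length bs}"
  define l where "l = (if b < a then Y b - 1 else Min (insert 0 U) - 1)"
  have finU: "finite U" unfolding U_def by simp
  have "l < u" if "u \<in> U" for u
  proof (cases "b < a")
    case True
    then show ?thesis using that Y3 Y4 unfolding U_def l_def by (auto split: if_splits)
  next
    case False
    then have "Min (insert 0 U) \<le> u" using finU that by simp
    then show ?thesis unfolding l_def using False by simp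
  qed
  then obtain y where y: "l < y" "\<And>u. u \<in> U \<Longrightarrow> y < u"
    using exists_between_finite[OF finU] by blast
  show ?thesis
  proof (rule that)
    show "0 < count_list bs True \<Longrightarrow> y < Y (count_list bs True - 1)"
      using y(2) unfolding U_def a_def by simp
    show "y + 1 < letter_value Y bs i" if "i < length bs" for i
      using y(2)[of "letter_value Y bs i - 1"] that unfolding U_def by auto
    show "count_list bs False < count_list bs True \<Longrightarrow> Y (count_list bs False) < y + 1"
      using y(1) unfolding l_def a_def b_def by simp
  qed
qed

lemma realizes_snoc_True:
  assumes Y: "realizes Y bs" and dom: "count_list bs False \<le> count_list bs True"
  obtains Y' where "realizes Y' (bs @ [True])"
proof -
  define a where "a = count_list bs True"
  define b where "b = count_list bs False"
  have Y1: "\<And>k k'. k < k' \<Longrightarrow> k' < a \<Longrightarrow> Y k' < Y k"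
   and Y2: "\<And>i j. i < j \<Longrightarrow> j < length bs \<Longrightarrow> letter_value Y bs j < letter_value Y bs i"
   and Y3: "\<And>i. b < a \<Longrightarrow> i < length bs \<Longrightarrow> Y b < letter_value Y bs i"
    using Y unfolding realizes_def a_def b_def Let_def by blast+
  have ba: "b \<le> a" using dom unfolding a_def b_def .
  obtain y where ya: "0 < a \<Longrightarrow> y < Y (a - 1)"
    and yv: "\<And>i. i < length bs \<Longrightarrow> y + 1 < letter_value Y bs i"
    and yb: "b < a \<Longrightarrow> Y b < y + 1"
    using realizes_room_for_True[OF Y] unfolding a_def b_def by blast
  define Y' where "Y' = Y(a := y)"
  have old: "letter_value Y' (bs @ [True]) i = letter_value Y bs i" if "i < length bs" for i
  proof -
    have "occ_before bs i \<noteq> a"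
      using occ_before_less[OF that] ba unfolding a_def b_def by (cases "bs ! i") auto
    then show ?thesis
      using that unfolding letter_value_def Y'_def by (simp add: occ_before_snoc nth_append)
  qed
  have last: "letter_value Y' (bs @ [True]) (length bs) = 1 + y"
    unfolding letter_value_def Y'_def by (simp add: occ_before_snoc a_def)
  have I1: "Y' k' < Y' k" if "k < k'" "k' < a + 1" for k k'
  proof (cases "k' = a")
    case True
    then have "Y (a - 1) \<le> Y k" using that Y1[of k "a - 1"] by (cases "k = a - 1") (auto simp: less_imp_le)
    then show ?thesis using True that ya unfolding Y'_def by simp
  qed (use that Y1[of k k'] in \<open>simp add: Y'_def\<close>)
  have I2: "letter_value Y' (bs @ [True]) j < letter_value Y' (bs @ [True]) i"
    if "i < j" "j < length bs + 1" for i j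
    using that last old[of i] old[of j] yv[of i] Y2[of i j] by (cases "j = length bs") auto
  have I3: "Y' b < letter_value Y' (bs @ [True]) i" if "i < length bs + 1" for i
    using that last old[of i] yv[of i] yb Y3[of i] ba unfolding Y'_def
    by (cases "i = length bs"; cases "b < a") auto
  have I4: "Y' b < Y' a + 1"
    using yb ba unfolding Y'_def by (cases "b < a") auto
  have "realizes Y' (bs @ [True])"
    unfolding realizes_def Let_def using I1 I2 I3 I4 by (simp add: a_def b_def)
  then show ?thesis by (rule that)
qed

lemma realizes_exists: "prefix_dominated bs \<Longrightarrow> \<exists>Y. realizes Y bs"
proof (induction bs rule: rev_induct)
  case Nil
  then show ?case unfolding realizes_def by simp
next
  case (snoc x bs)
  then have dom: "prefix_dominated bs" "count_list (bs @ [x]) False \<le> count_list (bs @ [x]) True"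
    by (simp_all add: prefix_dominated_snoc)
  then obtain Y where Y: "realizes Y bs" using snoc.IH by blast
  show ?case
  proof (cases x)
    case True
    obtain Y' where "realizes Y' (bs @ [True])"
      using realizes_snoc_True[OF Y count_list_le_if_prefix_dominated[OF dom(1)]] .
    then show ?thesis using True by auto
  next
    case False
    then show ?thesis using realizes_snoc_False[OF Y] dom(2) by auto
  qed
qed

lemma row_word_surj:
  assumes bs: "bs \<in> ballot_paths CARD('m::finite) CARD('m)"
  obtains p :: "nat \<Rightarrow> (real^2) \<times> (real^'m)" and c where "product_sweep p c" "row_word p = bs"
proof -
  define m where "m = CARD('m)"
  have cT: "count_list bs True = m" and cF: "count_list bs False = m" and dom: "prefix_dominated bs"
    using bs unfolding ballot_paths_def m_def by auto
  have len: "length bs = 2 * m" using count_list_True_False[of bs] cT cF by simp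
  obtain Y where Y: "realizes Y bs" using realizes_exists[OF dom] by blast
  obtain e :: "nat \<Rightarrow> 'm" where e: "bij_betw e {0..<m} UNIV"
    using ex_bij_betw_nat_finite[of "UNIV :: 'm set"] unfolding m_def by auto
  have occ: "occ_before bs i < m" if "i < 2 * m" for i
    using occ_before_less[of i bs] that len cT cF by (cases "bs ! i") auto
  define p :: "nat \<Rightarrow> (real^2) \<times> (real^'m)" where
    "p i = vtx (if bs ! i then 1 else 2) (e (occ_before bs i))" for i
  define c :: "(real^2) \<times> (real^'m)" where
    "c = ((\<chi> a. if a = 1 then 1 else 0), (\<chi> b. Y (inv_into {0..<m} e b)))"
  have "c \<bullet> p i = letter_value Y bs i" if "i < 2 * m" for i
    using occ[OF that] e unfolding p_def c_def inner_vtx letter_value_def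
    by (simp add: bij_betw_def)
  then have dec: "c \<bullet> p j < c \<bullet> p i" if "i < j" "j < 2 * m" for i j
    using Y that len unfolding realizes_def Let_def by auto
  have injp: "inj_on p {..<2 * m}"
    by (rule inj_onI) (metis dec lessThan_iff linorder_neqE_nat order_less_irrefl)
  have "p ` {..<2 * m} = Vtx"
    using card_image[OF injp] card_Vtx[where 'm='m] unfolding m_def
    by (intro card_subset_eq) (auto simp: p_def)
  then have sweep: "product_sweep p c"
    using injp dec unfolding product_sweep_def sweep_order_def card_Vtx bij_betw_def m_def by blast
  have "bs ! 0"
    using dom len unfolding prefix_dominated_def m_def
    by (cases bs) (auto dest!: spec[of _ 1] split: if_splits)
  then have "row_word p = bs"
    using len unfolding row_word_def p_def m_def by (intro nth_equalityI) auto
  then show ?thesis using sweep that by blast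
qed

lemma finite_ballot_paths: "finite (ballot_paths a b)"
proof -
  have "ballot_paths a b \<subseteq> {xs. set xs \<subseteq> UNIV \<and> length xs = a + b}"
    unfolding ballot_paths_def using count_list_True_False by auto
  moreover have "finite {xs. set xs \<subseteq> (UNIV :: bool set) \<and> length xs = a + b}"
    by (rule finite_lists_length_eq) simp
  ultimately show ?thesis by (rule finite_subset)
qed

lemma ballot_paths_0_0: "ballot_paths 0 0 = {[]}"
proof (intro equalityI subsetI)
  fix bs assume "bs \<in> ballot_paths 0 0"
  then show "bs \<in> {[]}" using count_list_True_False[of bs] by (simp add: ballot_paths_def)
qed (simp add: ballot_paths_def)

lemma ballot_paths_empty: "a < b \<Longrightarrow> ballot_paths a b = {}"
  unfolding ballot_paths_def using count_list_le_if_prefix_dominated by fastforce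

lemma snoc_in_ballot_paths:
  "bs @ [x] \<in> ballot_paths a b \<longleftrightarrow>
     b \<le> a \<and> (if x then 0 < a \<and> bs \<in> ballot_paths (a - 1) b else 0 < b \<and> bs \<in> ballot_paths a (b - 1))"
  by (cases x) (auto simp: ballot_paths_def prefix_dominated_snoc)

lemma ballot_paths_last_letter:
  assumes "b \<le> a" "0 < a"
  shows "ballot_paths a b = (\<lambda>bs. bs @ [True]) ` ballot_paths (a - 1) b \<union>
           (\<lambda>bs. bs @ [False]) ` (if 0 < b then ballot_paths a (b - 1) else {})"
proof (intro equalityI subsetI)
  fix bs assume bs: "bs \<in> ballot_paths a b"
  then have "bs \<noteq> []" using assms count_list_True_False[of bs] unfolding ballot_paths_def by auto
  then obtain ys x where bs_eq: "bs = ys @ [x]" by (metis rev_exhaust)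
  then have "ys @ [x] \<in> ballot_paths a b" using bs by simp
  then show "bs \<in> (\<lambda>bs. bs @ [True]) ` ballot_paths (a - 1) b \<union>
      (\<lambda>bs. bs @ [False]) ` (if 0 < b then ballot_paths a (b - 1) else {})"
    unfolding bs_eq snoc_in_ballot_paths by (cases x) auto
qed (use assms in \<open>auto simp: snoc_in_ballot_paths split: if_splits\<close>)

definition binomial_int :: "nat \<Rightarrow> int \<Rightarrow> int" where
  "binomial_int n k = (if k < 0 then 0 else int (n choose nat k))"

lemma binomial_int_Suc: "binomial_int (Suc n) k = binomial_int n k + binomial_int n (k - 1)"
proof (cases "k \<le> 0")
  case False
  then have "nat k = Suc (nat (k - 1))" by simp
  then show ?thesis unfolding binomial_int_def using False by simp
qed (auto simp: binomial_int_def)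

lemma binomial_int_middle:
  assumes "m + 1 = 2 * b"
  shows "binomial_int m b = binomial_int m (int b - 1)"
proof -
  have "0 < b" "m - b = b - 1" using assms by auto
  then show ?thesis
    using binomial_symmetric[of b m] assms by (simp add: binomial_int_def nat_diff_distrib')
qed

lemma card_ballot_paths:
  "int (card (ballot_paths a b)) =
     (if b \<le> a then binomial_int (a + b) b - binomial_int (a + b) (int b - 1) else 0)"
proof (induction "a + b" arbitrary: a b)
  case 0
  then show ?case by (simp add: ballot_paths_0_0 binomial_int_def)
next
  case (Suc n)
  show ?case
  proof (cases "b \<le> a")
    case False
    then show ?thesis by (simp add: ballot_paths_empty)
  next
    case ba: True
    have a0: "0 < a" using Suc.hyps(2) ba by simp
    have "int (card (ballot_paths a b)) =
        int (card (ballot_paths (a - 1) b)) + (if 0 < b then int (card (ballot_paths a (b - 1))) else 0)"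
      unfolding ballot_paths_last_letter[OF ba a0]
      by (subst card_Un_disjoint) (auto simp: finite_ballot_paths card_image inj_on_def)
    also have "\<dots> = binomial_int (a + b) b - binomial_int (a + b) (int b - 1)"
    proof (cases "b = 0")
      case True
      then show ?thesis using Suc.hyps a0 by (simp add: binomial_int_def)
    next
      case b0: False
      define m where "m = a + b - 1"
      have m: "a + b = Suc m" "a - 1 + b = m" "a + (b - 1) = m" unfolding m_def using a0 b0 by auto
      note IH = Suc.hyps(1)[of "a - 1" b] Suc.hyps(1)[of a "b - 1"]
      have "n = m" using Suc.hyps(2) m by simp
      have "int (card (ballot_paths (a - 1) b)) = binomial_int m b - binomial_int m (int b - 1)"
      proof (cases "b \<le> a - 1")
        case False
        then have "m + 1 = 2 * b" using ba m by simp
        then show ?thesis using IH(1) m \<open>n = m\<close> False binomial_int_middle by simp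
      qed (use IH(1) m \<open>n = m\<close> in simp)
      moreover have "int (card (ballot_paths a (b - 1))) = binomial_int m (int b - 1) - binomial_int m (int b - 2)"
        using IH(2) m \<open>n = m\<close> ba b0 by (simp add: le_diff_conv)
      ultimately show ?thesis
        using b0 m binomial_int_Suc[of m "int b"] binomial_int_Suc[of m "int b - 1"] by simp
    qed
    finally show ?thesis using ba by simp
  qed
qed

lemma card_ballot_paths_catalan: "real (card (ballot_paths m m)) = catalan m"
proof (cases "m = 0")
  case True
  then show ?thesis by (simp add: ballot_paths_0_0 catalan_def)
next
  case False
  define C where "C = real (2 * m choose m)"
  define D where "D = real (2 * m choose (m - 1))"
  have "int (card (ballot_paths m m)) = int (2 * m choose m) - int (2 * m choose (m - 1))"
    using card_ballot_paths[of m m] False by (simp add: binomial_int_def mult_2 nat_diff_distrib')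
  then have card: "real (card (ballot_paths m m)) = C - D"
    unfolding C_def D_def by (metis of_int_diff of_int_of_nat_eq)
  have "m * (2 * m choose m) = (m + 1) * (2 * m choose (m - 1))"
    using Suc_times_binomial_add[of "m - 1" m] False by (simp add: mult_2)
  then have "real m * C = (real m + 1) * D"
    unfolding C_def D_def by (metis of_nat_1 of_nat_add of_nat_mult)
  then have "C - D = C / (real m + 1)" by (simp add: field_simps)
  then show ?thesis unfolding catalan_def card C_def by simp
qed

lemma card_image_eq_if_same_kernel:
  assumes "\<And>x y. x \<in> X \<Longrightarrow> y \<in> X \<Longrightarrow> f x = f y \<longleftrightarrow> h x = h y"
  shows "card (f ` X) = card (h ` X)"
proof -
  define k where "k z = h (inv_into X f z)" for z
  have k: "k (f x) = h x" if "x \<in> X" for x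
    using assms[of "inv_into X f (f x)" x] that unfolding k_def by (simp add: inv_into_into f_inv_into_f)
  have "inj_on k (f ` X)"
    using assms k by (auto intro!: inj_onI)
  moreover have "k ` f ` X = h ` X" using k by (auto simp: image_iff)
  ultimately show ?thesis by (metis card_image)
qed

lemma is_sweep_Vtx_iff: "is_sweep Vtx p \<longleftrightarrow> (\<exists>c. product_sweep p c)"
  unfolding is_sweep_def product_sweep_def ..

lemma sweep_point_perm_act: "perm_act g (sweep_point A w p) = sweep_point A w (perm_act g \<circ> p)"
  unfolding sweep_point_def perm_act_sum by simp

lemma orbit_sweep_point_eq_iff:
  fixes p q :: "nat \<Rightarrow> (real^2) \<times> (real^'m::finite)"
  assumes w: "admissible_weights (2 * CARD('m)) w"
    and p: "product_sweep p c" and q: "product_sweep q d"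
  shows "orbit (sweep_point Vtx w p) = orbit (sweep_point Vtx w q) \<longleftrightarrow> row_word p = row_word q"
proof
  assume "orbit (sweep_point Vtx w p) = orbit (sweep_point Vtx w q)"
  then have "sweep_point Vtx w q \<in> orbit (sweep_point Vtx w p)" using in_orbit_self by simp
  then obtain g where g: "g \<in> perm_group" "sweep_point Vtx w q = sweep_point Vtx w (perm_act g \<circ> p)"
    unfolding orbit_def sweep_point_perm_act by blast
  have gp: "product_sweep (perm_act g \<circ> p) (perm_act g c)" using product_sweep_perm_act[OF p g(1)] .
  then have gp': "is_sweep Vtx (perm_act g \<circ> p)" unfolding is_sweep_Vtx_iff by (rule exI)
  have qb: "bij_betw q {..<card (Vtx :: ((real^2) \<times> (real^'m)) set)} Vtx"
    using q unfolding product_sweep_def sweep_order_def by (rule conjunct1)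
  have "\<forall>i<card (Vtx :: ((real^2) \<times> (real^'m)) set). q i = (perm_act g \<circ> p) i"
    using w unfolding card_Vtx[symmetric] by (rule sweep_point_inj[OF finite_Vtx _ gp' qb g(2)])
  then have "row_word q = row_word (perm_act g \<circ> p)"
    unfolding card_Vtx by (intro row_word_cong) simp
  then show "row_word p = row_word q" using row_word_perm_act[OF p g(1)] by simp
next
  assume "row_word p = row_word q"
  then obtain g where g: "g \<in> perm_group" "\<And>i. i < 2 * CARD('m) \<Longrightarrow> q i = perm_act g (p i)"
    using perm_act_if_row_word_eq[OF p q] by blast
  then have "sweep_point Vtx w q = perm_act g (sweep_point Vtx w p)"
    unfolding sweep_point_perm_act card_Vtx by (intro sweep_point_cong) (simp add: card_Vtx)
  then show "orbit (sweep_point Vtx w p) = orbit (sweep_point Vtx w q)"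
    using orbit_perm_act[OF g(1)] by simp
qed

lemma row_word_image:
  "row_word ` {p :: nat \<Rightarrow> (real^2) \<times> (real^'m::finite). \<exists>c. product_sweep p c} =
    ballot_paths CARD('m) CARD('m)"
proof (intro equalityI subsetI)
  fix bs assume "bs \<in> row_word ` {p :: nat \<Rightarrow> (real^2) \<times> (real^'m). \<exists>c. product_sweep p c}"
  then show "bs \<in> ballot_paths CARD('m) CARD('m)" using product_sweep.row_word_ballot by blast
next
  fix bs assume "bs \<in> ballot_paths CARD('m) CARD('m)"
  then obtain p :: "nat \<Rightarrow> (real^2) \<times> (real^'m)" and c where "product_sweep p c" "row_word p = bs"
    by (rule row_word_surj)
  then show "bs \<in> row_word ` {p :: nat \<Rightarrow> (real^2) \<times> (real^'m). \<exists>c. product_sweep p c}" by blast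
qed

theorem corollary2p7:
  fixes w :: "nat \<Rightarrow> real"
  assumes f_ge_1: "CARD('m::finite) \<ge> 2"
    and w: "admissible_weights (card (prod_simplex_vertices :: ((real^2) \<times> (real^'m)) set)) w"
  defines "V \<equiv> {v. v extreme_point_of
                   sweep_polytope (prod_simplex_vertices :: ((real^2) \<times> (real^'m)) set) w}"
  shows "(\<forall>g\<in>perm_group. \<forall>v\<in>V. perm_act g v \<in> V)
       \<and> real (card ((\<lambda>v. (\<lambda>g. perm_act g v) ` perm_group) ` V)) = catalan (CARD('m))"
proof -
  \<comment> \<open>The count holds for every f.\<close>
  define S where "S = {p :: nat \<Rightarrow> (real^2) \<times> (real^'m). \<exists>c. product_sweep p c}"
  obtain g0 :: "(real^2) \<times> (real^'m)" where "inj_on (\<lambda>u. g0 \<bullet> u) Vtx"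
    using inj_on_inner_Vtx by blast
  then have V: "V = sweep_point Vtx w ` S"
    unfolding V_def S_def is_sweep_Vtx_iff[symmetric] by (rule extreme_points_sweep_polytope[OF finite_Vtx w])
  have invariant: "perm_act g v \<in> V" if g: "g \<in> perm_group" and v: "v \<in> V" for g v
  proof -
    obtain p where p: "p \<in> S" "v = sweep_point Vtx w p" using v unfolding V by (rule imageE)
    then obtain c where "product_sweep p c" unfolding S_def by blast
    then have "perm_act g \<circ> p \<in> S" unfolding S_def using product_sweep_perm_act[OF _ g] by blast
    then show ?thesis unfolding V p(2) sweep_point_perm_act by (rule imageI)
  qed
  have "orbit (sweep_point Vtx w p) = orbit (sweep_point Vtx w q) \<longleftrightarrow> row_word p = row_word q"
    if "p \<in> S" "q \<in> S" for p q
    using that orbit_sweep_point_eq_iff w unfolding S_def card_Vtx by blast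
  then have orbits: "card ((\<lambda>v. (\<lambda>g. perm_act g v) ` perm_group) ` V) = card (row_word ` S)"
    unfolding V image_image orbit_def[symmetric] by (rule card_image_eq_if_same_kernel)
  show ?thesis
    using invariant orbits card_ballot_paths_catalan unfolding S_def row_word_image by simp
qed

end
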